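(* Let $k \ge 1$ and $m \in \{4k+3, 4k+5\}$, $\theta = 2\pi/m$. For every finite point set $P$ in general position and every $u, w \in P$, the path produced by $\theta$-routing from $u$ to $w$ in the $\theta_m$-graph on $P$ has length at most $$\left(1 + \frac{2\sin(\theta/2)\cos(\theta/4)}{\cos(\theta/2) - \sin(3\theta/4)}\right)|uw|.$$
   Context: Cones: for $m \ge 2$, $\theta = 2\pi/m$; around each point $u$ draw $m$ rays with consecutive angular separation $\theta$, oriented so the vertical upward ray from $u$ bisects a cone $C_0^u$; cones numbered clockwise, same orientation at every point. General position: no two points on a line parallel to a cone boundary ray, no two on a line perpendicular to a cone bisector, no three collinear. The $\theta_m$-graph on $P$: for each $u\in P$ and each cone $C_i^u$ containing another point of $P$, add an edge from $u$ to the point of $C_i^u$ whose orthogonal projection onto the bisector of $C_i^u$ is closest to $u$; edges weighted by Euclidean length. $\theta$-routing with destination $t$: at the current vertex $x$, if $xt$ is an edge, follow it; otherwise follow the edge from $x$ in the cone of $x$ containing $t$. *)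

theory Defs
  imports "HOL-Analysis.Analysis"
begin

type_synonym point = "real \<times> real"

definition cone_angle :: "nat \<Rightarrow> real" where
  "cone_angle m = 2 * pi / real m"

text \<open>Unit vector at clockwise angle phi measured from the upward vertical.\<close>
definition dir :: "real \<Rightarrow> point" where
  "dir phi = (sin phi, cos phi)"

text \<open>Cone C_i^u (i < m): the half-open cone with apex u bisected by the ray at clockwise
  angle i*theta from the upward vertical (so C_0^u is bisected by the upward ray and cones
  are numbered clockwise).\<close>
definition in_cone :: "nat \<Rightarrow> point \<Rightarrow> nat \<Rightarrow> point \<Rightarrow> bool" where
  "in_cone m u i v \<longleftrightarrow> (\<exists>r phi. r > 0 \<and>
      real i * cone_angle m - cone_angle m / 2 \<le> phi \<and>
      phi < real i * cone_angle m + cone_angle m / 2 \<and>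
      v = u + r *\<^sub>R dir phi)"

definition proj_len :: "nat \<Rightarrow> point \<Rightarrow> nat \<Rightarrow> point \<Rightarrow> real" where
  "proj_len m u i v = (v - u) \<bullet> dir (real i * cone_angle m)"

definition cross :: "point \<Rightarrow> point \<Rightarrow> real" where
  "cross a b = fst a * snd b - snd a * fst b"

definition general_position :: "nat \<Rightarrow> point set \<Rightarrow> bool" where
  "general_position m P \<longleftrightarrow>
     (\<forall>p\<in>P. \<forall>q\<in>P. p \<noteq> q \<longrightarrow>
        (\<forall>i<m. cross (p - q) (dir (real i * cone_angle m - cone_angle m / 2)) \<noteq> 0) \<and>
        (\<forall>i<m. (p - q) \<bullet> dir (real i * cone_angle m) \<noteq> 0)) \<and>
     (\<forall>p\<in>P. \<forall>q\<in>P. \<forall>r\<in>P. p \<noteq> q \<and> q \<noteq> r \<and> p \<noteq> r \<longrightarrow> cross (q - p) (r - p) \<noteq> 0)"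

definition nbr :: "point set \<Rightarrow> nat \<Rightarrow> point \<Rightarrow> nat \<Rightarrow> point" where
  "nbr P m u i = (THE v. v \<in> P \<and> in_cone m u i v \<and>
       (\<forall>w\<in>P. in_cone m u i w \<longrightarrow> proj_len m u i v \<le> proj_len m u i w))"

definition theta_edge :: "point set \<Rightarrow> nat \<Rightarrow> point \<Rightarrow> point \<Rightarrow> bool" where
  "theta_edge P m x y \<longleftrightarrow> x \<in> P \<and> y \<in> P \<and>
     ((\<exists>i<m. in_cone m x i y \<and> y = nbr P m x i) \<or>
      (\<exists>i<m. in_cone m y i x \<and> x = nbr P m y i))"

definition cone_idx :: "nat \<Rightarrow> point \<Rightarrow> point \<Rightarrow> nat" where
  "cone_idx m x t = (THE i. i < m \<and> in_cone m x i t)"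

definition route_step :: "point set \<Rightarrow> nat \<Rightarrow> point \<Rightarrow> point \<Rightarrow> point" where
  "route_step P m t x =
     (if x = t then t
      else if theta_edge P m x t then t
      else nbr P m x (cone_idx m x t))"

definition route_seq :: "point set \<Rightarrow> nat \<Rightarrow> point \<Rightarrow> point \<Rightarrow> nat \<Rightarrow> point" where
  "route_seq P m u t n = (route_step P m t ^^ n) u"

definition route_len :: "point set \<Rightarrow> nat \<Rightarrow> point \<Rightarrow> point \<Rightarrow> nat \<Rightarrow> real" where
  "route_len P m u t n = (\<Sum>j<n. dist (route_seq P m u t j) (route_seq P m u t (Suc j)))"

end

theory Submission
  imports Defs
begin

text \<open>
  Write alpha = theta/4, D = cos (2 alpha) - sin (3 alpha) and, for a point x and a destination t,
  let e1, e2 be the bisector of the cone of x containing t and its perpendicular.  The proof is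
  a potential-function argument with the potential
    Phi(x, t) = A ((t - x) . e1) + B |(t - x) . e2|,   A = (1 - sin alpha) / D,  B = cos alpha / D.
  In polar form Phi(x, t) = |xt| w(beta) / D, where beta is the angle between t - x and e1 and
    w(beta) = (1 - sin alpha) cos beta + cos alpha |sin beta|,
  and for |beta| <= 2 alpha this gives |xt| <= Phi(x, t) <= C |xt| with C the claimed constant.
  The heart of the proof is that every routing step x -> y pays for its length:
    |xy| + Phi(y, t) <= Phi(x, t).
  In the frame of the cone of x this is elementary (frame_potential_step); it remains to see
  that re-measuring Phi(y, t) in the frame of y's own cone can only decrease it
  (potential_le_frame_potential).  This is a trigonometric inequality for w under a shift of
  the angle by a multiple of theta (weight_wraparound) and it is the only place where
  m = 4k+3 or m = 4k+5 is used.  An abstract descent lemma (potential_descent) then shows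
  that the route reaches t and has length at most Phi(u, t) <= C |ut|.
\<close>

lemma inner_dir_dir: "dir a \<bullet> dir b = cos (a - b)"
  by (simp add: dir_def inner_prod_def cos_diff algebra_simps)

lemma inner_dir_dir_perp: "dir a \<bullet> dir (b + pi/2) = sin (a - b)"
  by (simp add: inner_dir_dir cos_diff sin_diff sin_add cos_add algebra_simps)

lemma norm_dir [simp]: "norm (dir a) = 1"
  by (simp add: dir_def norm_prod_def)

lemma dir_add_period: "dir (a + of_int n * (2*pi)) = dir a"
  using cos_int_2pin[of n] sin_int_2pin[of n]
  by (simp add: dir_def sin_add cos_add mult.commute)

lemma dir_eq_imp_period:
  assumes "dir a = dir b" shows "\<exists>n::int. a = b + of_int n * (2*pi)"
proof -
  have "cos (a - b) = 1" using assms inner_dir_dir[of a b] inner_dir_dir[of a a] by simp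
  then obtain n :: int where "a - b = of_int n * 2 * pi" using cos_one_2pi_int by blast
  thus ?thesis by (intro exI[of _ n]) (simp add: algebra_simps)
qed

lemma polar_form:
  fixes v :: point
  obtains phi where "v = norm v *\<^sub>R dir phi"
proof (cases "v = 0")
  case True thus ?thesis using that[of 0] by simp
next
  case False
  hence n: "norm v > 0" by simp
  have "(snd v / norm v)\<^sup>2 + (fst v / norm v)\<^sup>2 = ((fst v)\<^sup>2 + (snd v)\<^sup>2) / (norm v)\<^sup>2"
    by (simp add: power_divide add_divide_distrib)
  also have "\<dots> = (norm v)\<^sup>2 / (norm v)\<^sup>2" by (simp add: norm_prod_def)
  also have "\<dots> = 1" using n by simp
  finally obtain t where "snd v / norm v = cos t" "fst v / norm v = sin t"
    using sincos_total_2pi by blast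
  hence "v = norm v *\<^sub>R dir t" using n by (cases v) (simp add: dir_def field_simps)
  thus ?thesis by (rule that)
qed

lemma angle_reduce:
  fixes c s :: real
  obtains n :: int where "s \<le> c - of_int n * (2*pi)" "c - of_int n * (2*pi) < s + 2*pi"
proof
  define n where "n = \<lfloor>(c - s) / (2*pi)\<rfloor>"
  have "of_int n \<le> (c - s) / (2*pi)" "(c - s) / (2*pi) < of_int n + 1"
    unfolding n_def by linarith+
  thus "s \<le> c - of_int n * (2*pi)" "c - of_int n * (2*pi) < s + 2*pi"
    by (simp_all add: field_simps)
qed

section \<open>Cones\<close>

lemma cone_angle_pos: "m > 0 \<Longrightarrow> cone_angle m > 0"
  by (simp add: cone_angle_def)

lemma cone_angle_full_turn: "m > 0 \<Longrightarrow> real m * cone_angle m = 2 * pi"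
  by (simp add: cone_angle_def)

lemma in_cone_polar:
  assumes "in_cone m u i v"
  obtains phi where "real i * cone_angle m - cone_angle m / 2 \<le> phi"
    "phi < real i * cone_angle m + cone_angle m / 2" "v - u = norm (v - u) *\<^sub>R dir phi" "v \<noteq> u"
proof -
  from assms obtain r phi where r: "r > 0" "real i * cone_angle m - cone_angle m / 2 \<le> phi"
      "phi < real i * cone_angle m + cone_angle m / 2" "v = u + r *\<^sub>R dir phi"
    unfolding in_cone_def by blast
  have e: "v - u = r *\<^sub>R dir phi" and nr: "norm (v - u) = r" using r by simp_all
  have "v \<noteq> u" using nr r(1) by force
  with e nr show ?thesis using r that[of phi] by auto
qed

lemma in_cone_neq: "in_cone m u i v \<Longrightarrow> v \<noteq> u"
  by (erule in_cone_polar)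

lemma in_cone_I:
  assumes "real i * cone_angle m - cone_angle m / 2 \<le> phi"
    "phi < real i * cone_angle m + cone_angle m / 2" "v - u = r *\<^sub>R dir phi" "r > 0"
  shows "in_cone m u i v"
  unfolding in_cone_def using assms by (intro exI[of _ r] exI[of _ phi]) (auto simp: algebra_simps)

lemma cone_exists:
  assumes m: "m > 0" and v: "v \<noteq> u"
  shows "\<exists>i<m. in_cone m u i v"
proof -
  let ?th = "cone_angle m"
  have th: "?th > 0" "real m * ?th = 2*pi" using m cone_angle_pos cone_angle_full_turn by auto
  obtain phi where phi: "v - u = norm (v - u) *\<^sub>R dir phi" using polar_form by blast
  obtain n :: int where n: "- (?th/2) \<le> phi - of_int n * (2*pi)" "phi - of_int n * (2*pi) < 2*pi - ?th/2"
    using angle_reduce[of "- (?th/2)" phi] by auto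
  define psi where "psi = phi - of_int n * (2*pi)"
  have dpsi: "dir psi = dir phi" using dir_add_period[of psi n] by (simp add: psi_def)
  define i where "i = nat \<lfloor>(psi + ?th/2) / ?th\<rfloor>"
  have fl0: "0 \<le> \<lfloor>(psi + ?th/2) / ?th\<rfloor>" using n th by (simp add: psi_def)
  have i1: "real i \<le> (psi + ?th/2) / ?th" using fl0 unfolding i_def by simp
  have i2: "(psi + ?th/2) / ?th < real i + 1" using fl0 unfolding i_def by linarith
  have a1: "real i * ?th \<le> psi + ?th/2" using i1 th by (simp add: field_simps)
  have a2: "psi + ?th/2 < (real i + 1) * ?th" using i2 th by (simp add: field_simps)
  have "(psi + ?th/2) / ?th < 2*pi / ?th" using n th by (simp add: psi_def divide_strict_right_mono)
  also have "2*pi / ?th = real m" using th by (simp add: field_simps)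
  finally have "i < m" using i1 by simp
  moreover have "in_cone m u i v"
    by (rule in_cone_I[of i m psi v u "norm (v - u)"]) (use a1 a2 phi dpsi v in \<open>auto simp: algebra_simps\<close>)
  ultimately show ?thesis by blast
qed

lemma cone_unique:
  assumes m: "m > 0" and c1: "in_cone m u i v" and c2: "in_cone m u j v" and ij: "i < m" "j < m"
  shows "i = j"
proof -
  let ?th = "cone_angle m"
  have th: "?th > 0" "real m * ?th = 2*pi" using m cone_angle_pos cone_angle_full_turn by auto
  obtain a where a: "real i * ?th - ?th/2 \<le> a" "a < real i * ?th + ?th/2"
      "v - u = norm (v - u) *\<^sub>R dir a" "v \<noteq> u"
    using in_cone_polar[OF c1] by blast
  obtain b where b: "real j * ?th - ?th/2 \<le> b" "b < real j * ?th + ?th/2"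
      "v - u = norm (v - u) *\<^sub>R dir b"
    using in_cone_polar[OF c2] by blast
  have "dir a = dir b" using a(3,4) b(3) by (metis scaleR_cancel_left norm_eq_zero right_minus_eq)
  then obtain n :: int where n: "a = b + of_int n * (2*pi)" using dir_eq_imp_period by blast
  have "real i * ?th \<le> (real m - 1) * ?th" "real j * ?th \<le> (real m - 1) * ?th"
    using ij th by (auto intro!: mult_right_mono)
  moreover have "(real m - 1) * ?th = 2*pi - ?th" using th by (simp add: algebra_simps)
  moreover have "0 \<le> real i * ?th" "0 \<le> real j * ?th" using th by auto
  ultimately have "\<bar>a - b\<bar> < 2*pi" using a(1,2) b(1,2) by linarith
  hence "\<bar>of_int n\<bar> * (2*pi) < 1 * (2*pi)" using n by (simp add: abs_mult)
  hence "\<bar>of_int n\<bar> < (1::real)" by (simp add: mult_less_cancel_right_pos)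
  hence "a = b" using n by simp
  hence "real i * ?th < (real j + 1) * ?th" "real j * ?th < (real i + 1) * ?th"
    using a b by (simp_all add: algebra_simps)
  hence "real i < real j + 1" "real j < real i + 1" using th
    by (simp_all add: mult_less_cancel_right_pos)
  thus ?thesis by linarith
qed

lemma cone_idx:
  assumes "m > 0" and "v \<noteq> u"
  shows "cone_idx m u v < m" "in_cone m u (cone_idx m u v) v"
proof -
  have "\<exists>!i. i < m \<and> in_cone m u i v" using cone_exists[OF assms] cone_unique[OF assms(1)] by blast
  hence "cone_idx m u v < m \<and> in_cone m u (cone_idx m u v) v"
    unfolding cone_idx_def by (rule theI')
  thus "cone_idx m u v < m" "in_cone m u (cone_idx m u v) v" by auto
qed

lemma cone_idx_eq:
  assumes "m > 0" "in_cone m u i v" "i < m" shows "cone_idx m u v = i"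
  using cone_idx[OF assms(1) in_cone_neq[OF assms(2)]] cone_unique[OF assms(1)] assms(2,3) by blast

section \<open>The weight function\<close>

text \<open>weight a b is the potential per unit length of a vector making angle b with the
  bisector of its cone, for the quarter cone angle a (up to the positive factor 1/D).\<close>
definition weight :: "real \<Rightarrow> real \<Rightarrow> real" where
  "weight a b = (1 - sin a) * cos b + cos a * \<bar>sin b\<bar>"

lemma weight_minus [simp]: "weight a (-b) = weight a b"
  by (simp add: weight_def)

lemma weight_abs: "weight a \<bar>b\<bar> = weight a b"
  by (cases "0 \<le> b") simp_all

lemma weight_upper_half: "0 \<le> b \<Longrightarrow> b \<le> pi \<Longrightarrow> weight a b = cos b + sin (b - a)"
  using sin_ge_zero[of b] by (simp add: weight_def sin_diff algebra_simps)

text \<open>On a cone (|b| <= 2a) the weight is largest at the cone boundary \<dots>\<close>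
lemma weight_le_peak_nonneg:
  assumes b: "0 \<le> b" "b \<le> 2*a" and a: "3*a \<le> pi/2"
  shows "cos b + sin (b - a) \<le> cos (2*a) + sin a"
proof -
  have e1: "cos b - cos (2*a) = 2 * sin ((b + 2*a)/2) * sin ((2*a - b)/2)" by (rule cos_diff_cos)
  have e2: "sin a - sin (b - a) = 2 * sin ((2*a - b)/2) * cos (b/2)"
    using sin_diff_sin[of a "b - a"] by (simp add: algebra_simps)
  have s0: "0 \<le> sin ((2*a - b)/2)" by (rule sin_ge_zero) (use a b in auto)
  have "sin ((b + 2*a)/2) \<le> sin (pi/2 - b/2)"
    by (subst sin_mono_le_eq) (use a b in auto)
  also have "\<dots> = cos (b/2)" by (simp add: sin_cos_eq)
  finally have "sin ((2*a - b)/2) * sin ((b + 2*a)/2) \<le> sin ((2*a - b)/2) * cos (b/2)"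
    using s0 by (rule mult_left_mono)
  thus ?thesis using e1 e2 by (simp add: algebra_simps)
qed

lemma weight_le_peak:
  assumes "\<bar>b\<bar> \<le> 2*a" "3*a \<le> pi/2"
  shows "weight a b \<le> cos (2*a) + sin a"
proof -
  have "weight a b = cos \<bar>b\<bar> + sin (\<bar>b\<bar> - a)"
    using weight_abs[of a b] weight_upper_half[of "\<bar>b\<bar>" a] assms by auto
  also have "\<dots> \<le> cos (2*a) + sin a" using weight_le_peak_nonneg[of "\<bar>b\<bar>" a] assms by simp
  finally show ?thesis .
qed

lemma weight_ge_floor:
  assumes b: "\<bar>b\<bar> \<le> 2*a" and a: "3*a \<le> pi/2"
  shows "(1 - sin a) * cos (2*a) \<le> weight a b"
proof -
  have "cos (2*a) \<le> cos \<bar>b\<bar>" by (subst cos_mono_le_eq) (use a b in auto)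
  hence "(1 - sin a) * cos (2*a) \<le> (1 - sin a) * cos b" by (simp add: mult_left_mono)
  moreover have "0 \<le> cos a * \<bar>sin b\<bar>" using a b by (simp add: cos_ge_zero)
  ultimately show ?thesis unfolding weight_def by linarith
qed

lemma weight_mid:
  assumes a: "0 \<le> a" and p: "2*a \<le> p" "p \<le> pi/2 - a"
  shows "cos (2*a) + sin a \<le> weight a p"
proof -
  have e1: "cos p - cos (2*a) = 2 * sin ((p + 2*a)/2) * sin ((2*a - p)/2)" by (rule cos_diff_cos)
  have e3: "sin ((2*a - p)/2) = - sin ((p - 2*a)/2)"
    by (metis minus_diff_eq minus_divide_left sin_minus)
  have e2: "sin (p - a) - sin a = 2 * sin ((p - 2*a)/2) * cos (p/2)"
    using sin_diff_sin[of "p - a" a] by (simp add: algebra_simps)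
  have s0: "0 \<le> sin ((p - 2*a)/2)" by (rule sin_ge_zero) (use a p in auto)
  have "sin ((p + 2*a)/2) \<le> sin (pi/2 - p/2)"
    by (subst sin_mono_le_eq) (use a p in auto)
  also have "\<dots> = cos (p/2)" by (simp add: sin_cos_eq)
  finally have "sin ((p - 2*a)/2) * sin ((p + 2*a)/2) \<le> sin ((p - 2*a)/2) * cos (p/2)"
    using s0 by (rule mult_left_mono)
  moreover have "weight a p = cos p + sin (p - a)" using a p by (intro weight_upper_half) auto
  ultimately show ?thesis using e1 e2 e3 by (simp add: algebra_simps)
qed

text \<open>Near the right angle, shifting by pi/2 + a (the case m = 4k+3) preserves the weight \<dots>\<close>
lemma weight_reflect:
  assumes "0 \<le> p" "p \<le> pi/2" "0 \<le> a" "a \<le> pi/2"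
  shows "weight a (p - pi/2 - a) = weight a p"
proof -
  have "p - pi/2 - a = - (pi/2 + a - p)" by simp
  hence "weight a (p - pi/2 - a) = weight a (pi/2 + a - p)" by (simp only: weight_minus)
  also have "\<dots> = cos (pi/2 + a - p) + sin (pi/2 - p)"
    using assms by (subst weight_upper_half) auto
  also have "\<dots> = cos p + sin (p - a)"
    by (simp add: cos_diff sin_diff cos_add sin_add)
  also have "\<dots> = weight a p" using assms by (subst weight_upper_half) auto
  finally show ?thesis .
qed

text \<open>\<dots> and shifting by pi/2 - a (the case m = 4k+5) does not increase it.\<close>
lemma weight_shift_le:
  assumes "pi/2 - a \<le> p" "p \<le> pi/2" "0 \<le> p" "a \<le> pi/2"
  shows "weight a (p - pi/2 + a) \<le> weight a p"
proof -
  have "weight a (p - pi/2 + a) = cos (p - pi/2 + a) + sin (p - pi/2)"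
    using assms by (subst weight_upper_half) auto
  also have "\<dots> = sin p * cos a + cos p * sin a - cos p"
    by (simp add: cos_diff sin_diff cos_add sin_add algebra_simps)
  also have "\<dots> \<le> cos p + sin (p - a)"
  proof -
    have "cos p * sin a \<le> cos p" using assms by (simp add: cos_ge_zero mult_left_le)
    thus ?thesis by (simp add: sin_diff algebra_simps)
  qed
  also have "\<dots> = weight a p" using assms by (subst weight_upper_half) auto
  finally show ?thesis .
qed

text \<open>Near the right angle the offset between the two cone frames is forced to be
  (k + 1) theta = pi/2 + a or pi/2 - a according as m = 4k+3 or m = 4k+5.\<close>
lemma weight_wraparound_top:
  fixes L :: int and k :: nat
  assumes a: "0 < a" and m: "pi/2 = (4 * real k + 3) * a \<or> pi/2 = (4 * real k + 5) * a"
    and p: "pi/2 - a < p" "p \<le> pi/2" and b: "b = p - 4 * of_int L * a" "\<bar>b\<bar> \<le> 2*a"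
  shows "weight a b \<le> weight a p"
proof -
  have m_bounds: "4 * (real k * a) + 3 * a \<le> pi/2" "pi/2 \<le> 4 * (real k * a) + 5 * a"
    using m a by (auto simp: algebra_simps)
  have L4: "4 * (of_int L * a) = p - b" and b_bounds: "- 2 * a \<le> b" "b \<le> 2 * a"
    using b by (simp_all add: abs_le_iff)
  have "0 \<le> real k * a" using a by simp
  hence a_le: "a \<le> pi/2" using m_bounds a by linarith
  have "real k * a < of_int L * a" "of_int L * a < (real k + 2) * a"
    using m_bounds L4 b_bounds p a unfolding distrib_right by linarith+
  hence "real k < of_int L" "of_int L < real k + 2" using a
    by (simp_all add: mult_less_cancel_right_pos)
  hence L: "L = int k + 1" by linarith
  show ?thesis using m
  proof
    assume "pi/2 = (4 * real k + 3) * a"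
    hence "b = p - pi/2 - a" using b L by (simp add: algebra_simps)
    thus ?thesis using weight_reflect[of p a] p a a_le by simp
  next
    assume "pi/2 = (4 * real k + 5) * a"
    hence "b = p - pi/2 + a" using b L by (simp add: algebra_simps)
    thus ?thesis using weight_shift_le[of a p] p a a_le by simp
  qed
qed

text \<open>Let a = pi/(2m) be the quarter cone angle.  If a direction makes
  angle p (|p| <= pi/2) with the bisector of one cone and angle b (|b| <= 2a) with the bisector
  of the cone that contains it, the two angles differ by a multiple of 4a = theta, and for
  m = 4k+3 or m = 4k+5 the weight measured in the own cone is the smaller one.  The integer L
  is pinned down by the size of p: L = 0 or 1 for small p, and L = k + 1 when p is close to
  pi/2, which is where the residue of m modulo 4 enters.\<close>
lemma weight_wraparound_nonneg:
  fixes L :: int and k m :: nat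
  assumes k: "1 \<le> k" and m: "m = 4*k+3 \<or> m = 4*k+5" and am: "real m * a = pi/2"
    and p: "0 \<le> p" "p \<le> pi/2" and b: "b = p - 4 * of_int L * a" "\<bar>b\<bar> \<le> 2*a"
  shows "weight a b \<le> weight a p"
proof -
  have "0 < real m * a" using am pi_gt_zero by linarith
  hence a0: "0 < a" by (simp add: zero_less_mult_iff)
  have "7 * a \<le> real m * a" using k m a0 by (intro mult_right_mono) auto
  hence a: "0 < a" "a \<le> pi/14" using am a0 by auto
  consider (small) "p \<le> 2*a" | (middle) "2*a \<le> p" "p \<le> pi/2 - a" | (top) "pi/2 - a < p"
    by linarith
  thus ?thesis
  proof cases
    case small
    have "of_int L * a < 2 * a" "- 1 * a < of_int L * a"
      using b small p(1) a(1) unfolding abs_le_iff by linarith+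
    hence "L < 2" "-1 < L" using a mult_less_cancel_right_pos[of a "-1" "of_int L"]
      by (simp_all add: mult_less_cancel_right_pos)
    hence "L = 0 \<or> L = 1" by linarith
    hence "b = p \<or> b = - p" using b small by (auto simp: abs_le_iff)
    thus ?thesis by auto
  next
    case middle
    thus ?thesis using weight_le_peak[of b a] weight_mid[of a p] a b by linarith
  next
    case top
    have "pi/2 = (4 * real k + 3) * a \<or> pi/2 = (4 * real k + 5) * a" using m am by auto
    thus ?thesis using weight_wraparound_top a(1) top p(2) b by blast
  qed
qed

lemma weight_wraparound:
  fixes L :: int and k m :: nat
  assumes "1 \<le> k" "m = 4*k+3 \<or> m = 4*k+5" "real m * a = pi/2"
    and p: "\<bar>p\<bar> \<le> pi/2" and b: "b = p - 4 * of_int L * a" "\<bar>b\<bar> \<le> 2*a"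
  shows "weight a b \<le> weight a p"
proof (cases "0 \<le> p")
  case True thus ?thesis using weight_wraparound_nonneg[OF assms(1-3)] p b by auto
next
  case False
  have "weight a (-b) \<le> weight a (-p)"
    by (rule weight_wraparound_nonneg[OF assms(1-3), where L="-L"]) (use False p b in auto)
  thus ?thesis by simp
qed

section \<open>The potential\<close>

definition quarter_angle :: "nat \<Rightarrow> real" where
  "quarter_angle m = cone_angle m / 4"

definition weight_denom :: "nat \<Rightarrow> real" where
  "weight_denom m = cos (2 * quarter_angle m) - sin (3 * quarter_angle m)"

definition coef_par :: "nat \<Rightarrow> real" where
  "coef_par m = (1 - sin (quarter_angle m)) / weight_denom m"

definition coef_perp :: "nat \<Rightarrow> real" where
  "coef_perp m = cos (quarter_angle m) / weight_denom m"

definition frame_potential :: "nat \<Rightarrow> real \<Rightarrow> point \<Rightarrow> real" where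
  "frame_potential m c v = coef_par m * (v \<bullet> dir c) + coef_perp m * \<bar>v \<bullet> dir (c + pi/2)\<bar>"

definition potential :: "nat \<Rightarrow> point \<Rightarrow> point \<Rightarrow> real" where
  "potential m x t = frame_potential m (real (cone_idx m x t) * cone_angle m) (t - x)"

lemma potential_self [simp]: "potential m x x = 0"
  by (simp add: potential_def frame_potential_def)

lemma frame_potential_polar:
  assumes "0 \<le> r"
  shows "frame_potential m c (r *\<^sub>R dir phi) = r * weight (quarter_angle m) (phi - c) / weight_denom m"
proof -
  have "dir phi \<bullet> dir (c + pi/2) = sin (phi - c)" by (rule inner_dir_dir_perp)
  thus ?thesis using assms
    by (simp add: frame_potential_def coef_par_def coef_perp_def weight_def inner_dir_dir
        abs_mult add_divide_distrib diff_divide_distrib algebra_simps)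
qed

lemma cos_nonneg_imp_abs_le:
  fixes p :: real
  assumes "\<bar>p\<bar> \<le> pi" "0 \<le> cos p"
  shows "\<bar>p\<bar> \<le> pi/2"
proof (rule ccontr)
  assume "\<not> \<bar>p\<bar> \<le> pi/2"
  hence "cos \<bar>p\<bar> < cos (pi/2)" using assms(1) by (subst cos_mono_less_eq) auto
  thus False using assms(2) by simp
qed

text \<open>The bounds on the potential and the geometric step inequality hold for every m >= 6;
  m >= 6 is what makes the denominator D = cos (2 alpha) - sin (3 alpha) positive.\<close>
locale cone_family =
  fixes m :: nat
  assumes many_cones: "6 \<le> m"
begin

abbreviation \<alpha> :: real where "\<alpha> \<equiv> quarter_angle m"

lemma m_pos: "0 < m"
  using many_cones by simp

lemma cone_angle_eq: "cone_angle m = 4 * \<alpha>"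
  by (simp add: quarter_angle_def)

lemma m_alpha: "real m * \<alpha> = pi/2"
  using cone_angle_full_turn[OF m_pos] by (simp add: quarter_angle_def)

lemma alpha_pos: "0 < \<alpha>"
  using cone_angle_pos[OF m_pos] by (simp add: quarter_angle_def)

lemma alpha_small: "\<alpha> \<le> pi/12"
proof -
  have "6 * \<alpha> \<le> real m * \<alpha>" using many_cones alpha_pos by (intro mult_right_mono) auto
  thus ?thesis using m_alpha by simp
qed

lemma cos_2alpha_pos: "0 < cos (2 * \<alpha>)"
  by (rule cos_gt_zero) (use alpha_pos alpha_small in auto)

lemma sin_2alpha_pos: "0 < sin (2 * \<alpha>)"
  by (rule sin_gt_zero) (use alpha_pos alpha_small in auto)

lemma weight_denom_pos: "0 < weight_denom m"
proof -
  have "sin (3 * \<alpha>) < sin (pi/2 - 2 * \<alpha>)"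
    by (subst sin_mono_less_eq) (use alpha_pos alpha_small in auto)
  also have "\<dots> = cos (2 * \<alpha>)" by (simp add: sin_cos_eq)
  finally show ?thesis by (simp add: weight_denom_def)
qed

lemma coef_perp_nonneg: "0 \<le> coef_perp m"
  using weight_denom_pos alpha_pos alpha_small by (simp add: coef_perp_def cos_ge_zero)

text \<open>The defining identity of the two coefficients: for a unit step at angle 2 alpha from the
  bisector, the decrease A cos (2 alpha) of the bisector term exactly covers the length of the
  step plus the worst-case increase B sin (2 alpha) of the perpendicular term.\<close>
lemma coef_identity: "coef_par m * cos (2 * \<alpha>) = 1 + coef_perp m * sin (2 * \<alpha>)"
proof -
  have "sin (3 * \<alpha>) = sin (2 * \<alpha>) * cos \<alpha> + cos (2 * \<alpha>) * sin \<alpha>"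
    using sin_add[of "2 * \<alpha>" \<alpha>] by (simp add: algebra_simps)
  hence "(1 - sin \<alpha>) * cos (2 * \<alpha>) = weight_denom m + cos \<alpha> * sin (2 * \<alpha>)"
    by (simp add: weight_denom_def algebra_simps)
  thus ?thesis using weight_denom_pos by (simp add: coef_par_def coef_perp_def field_simps)
qed

text \<open>The constant of the theorem is the maximal weight divided by D.\<close>
lemma stretch_factor_eq:
  "1 + 2 * sin (cone_angle m / 2) * cos (cone_angle m / 4)
       / (cos (cone_angle m / 2) - sin (3 * cone_angle m / 4))
   = (cos (2 * \<alpha>) + sin \<alpha>) / weight_denom m"
proof -
  have angles: "cone_angle m / 2 = 2 * \<alpha>" "cone_angle m / 4 = \<alpha>" "3 * cone_angle m / 4 = 3 * \<alpha>"
    by (simp_all add: quarter_angle_def)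
  have "sin \<alpha> = sin (2 * \<alpha>) * cos \<alpha> - cos (2 * \<alpha>) * sin \<alpha>"
       "sin (3 * \<alpha>) = sin (2 * \<alpha>) * cos \<alpha> + cos (2 * \<alpha>) * sin \<alpha>"
    using sin_diff[of "2 * \<alpha>" \<alpha>] sin_add[of "2 * \<alpha>" \<alpha>] by (simp_all add: algebra_simps)
  hence "cos (2 * \<alpha>) + sin \<alpha> = weight_denom m + 2 * sin (2 * \<alpha>) * cos \<alpha>"
    by (simp add: weight_denom_def algebra_simps)
  thus ?thesis unfolding angles using weight_denom_pos by (simp add: weight_denom_def field_simps)
qed

lemma potential_polar:
  assumes "in_cone m x i t" "i < m" and "t - x = r *\<^sub>R dir phi" "0 \<le> r"
  shows "potential m x t = r * weight \<alpha> (phi - real i * cone_angle m) / weight_denom m"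
  using assms frame_potential_polar cone_idx_eq[OF m_pos assms(1,2)] by (simp add: potential_def)

lemma potential_bounds:
  shows "dist x t \<le> potential m x t"
    and "potential m x t \<le> (cos (2 * \<alpha>) + sin \<alpha>) / weight_denom m * dist x t"
proof -
  have "dist x t \<le> potential m x t
        \<and> potential m x t \<le> (cos (2 * \<alpha>) + sin \<alpha>) / weight_denom m * dist x t"
  proof (cases "x = t")
    case True thus ?thesis by simp
  next
    case False
    define i where "i = cone_idx m x t"
    have i: "i < m" "in_cone m x i t" using cone_idx[OF m_pos] False unfolding i_def by auto
    obtain phi where phi: "real i * cone_angle m - cone_angle m / 2 \<le> phi"
        "phi < real i * cone_angle m + cone_angle m / 2" "t - x = dist x t *\<^sub>R dir phi"
      using in_cone_polar[OF i(2)] by (metis dist_commute dist_norm)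
    define b where "b = phi - real i * cone_angle m"
    have b: "\<bar>b\<bar> \<le> 2 * \<alpha>" "3 * \<alpha> \<le> pi/2" using phi alpha_small by (auto simp: b_def cone_angle_eq)
    have pot: "potential m x t = dist x t * (weight \<alpha> b / weight_denom m)"
      using potential_polar[OF i(2,1) phi(3)] by (simp add: b_def)
    have "1 \<le> coef_par m * cos (2 * \<alpha>)"
      using coef_identity coef_perp_nonneg sin_2alpha_pos by simp
    also have "\<dots> = (1 - sin \<alpha>) * cos (2 * \<alpha>) / weight_denom m" by (simp add: coef_par_def)
    also have "\<dots> \<le> weight \<alpha> b / weight_denom m"
      using weight_ge_floor[OF b] weight_denom_pos by (simp add: divide_right_mono)
    finally have lower: "1 \<le> weight \<alpha> b / weight_denom m" .
    have upper: "weight \<alpha> b / weight_denom m \<le> (cos (2 * \<alpha>) + sin \<alpha>) / weight_denom m"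
      using weight_le_peak[OF b] weight_denom_pos by (simp add: divide_right_mono)
    show ?thesis
      unfolding pot using mult_left_mono[OF lower] mult_left_mono[OF upper] by (simp add: mult.commute)
  qed
  thus "dist x t \<le> potential m x t"
    and "potential m x t \<le> (cos (2 * \<alpha>) + sin \<alpha>) / weight_denom m * dist x t" by auto
qed

text \<open>A point y in cone i of x lies within angle 2 alpha of the bisector, so its coordinates
  in the frame of that cone satisfy the following two estimates.\<close>
lemma cone_sector_bounds:
  assumes "in_cone m x i y"
  shows "cos (2 * \<alpha>) * dist x y \<le> (y - x) \<bullet> dir (real i * cone_angle m)"
    and "cos (2 * \<alpha>) * \<bar>(y - x) \<bullet> dir (real i * cone_angle m + pi/2)\<bar>
           \<le> sin (2 * \<alpha>) * ((y - x) \<bullet> dir (real i * cone_angle m))"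
proof -
  obtain phi where phi: "real i * cone_angle m - cone_angle m / 2 \<le> phi"
      "phi < real i * cone_angle m + cone_angle m / 2" "y - x = dist x y *\<^sub>R dir phi"
    using in_cone_polar[OF assms] by (metis dist_commute dist_norm)
  define g where "g = phi - real i * cone_angle m"
  have g: "\<bar>g\<bar> \<le> 2 * \<alpha>" using phi by (auto simp: g_def cone_angle_eq)
  have par: "(y - x) \<bullet> dir (real i * cone_angle m) = dist x y * cos g"
    by (subst phi(3)) (simp add: inner_dir_dir g_def)
  have perp: "(y - x) \<bullet> dir (real i * cone_angle m + pi/2) = dist x y * sin g"
    by (subst phi(3)) (simp add: inner_dir_dir_perp g_def)
  have "cos (2 * \<alpha>) \<le> cos \<bar>g\<bar>" by (subst cos_mono_le_eq) (use g alpha_small in auto)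
  hence cg: "cos (2 * \<alpha>) \<le> cos g" by simp
  show "cos (2 * \<alpha>) * dist x y \<le> (y - x) \<bullet> dir (real i * cone_angle m)"
    using mult_left_mono[OF cg zero_le_dist] unfolding par by (simp add: mult.commute)
  have "0 \<le> sin (2 * \<alpha> - \<bar>g\<bar>)" by (rule sin_ge_zero) (use g alpha_small in auto)
  also have "sin (2 * \<alpha> - \<bar>g\<bar>) = sin (2 * \<alpha>) * cos g - cos (2 * \<alpha>) * \<bar>sin g\<bar>"
  proof -
    have "0 \<le> sin \<bar>g\<bar>" by (rule sin_ge_zero) (use g alpha_small in auto)
    hence "\<bar>sin g\<bar> = sin \<bar>g\<bar>" by (cases "0 \<le> g") auto
    thus ?thesis by (simp add: sin_diff)
  qed
  finally have "cos (2 * \<alpha>) * \<bar>sin g\<bar> \<le> sin (2 * \<alpha>) * cos g" by simp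
  from mult_left_mono[OF this zero_le_dist[of x y]]
  show "cos (2 * \<alpha>) * \<bar>(y - x) \<bullet> dir (real i * cone_angle m + pi/2)\<bar>
           \<le> sin (2 * \<alpha>) * ((y - x) \<bullet> dir (real i * cone_angle m))"
    unfolding par perp by (simp add: abs_mult algebra_simps)
qed

lemma frame_potential_step:
  assumes "in_cone m x i y"
  shows "dist x y + frame_potential m (real i * cone_angle m) (t - y)
         \<le> frame_potential m (real i * cone_angle m) (t - x)"
proof -
  let ?e1 = "dir (real i * cone_angle m)" and ?e2 = "dir (real i * cone_angle m + pi/2)"
  define Y1 where "Y1 = (y - x) \<bullet> ?e1"
  define Y2 where "Y2 = (y - x) \<bullet> ?e2"
  define W1 where "W1 = (t - y) \<bullet> ?e1"
  define W2 where "W2 = (t - y) \<bullet> ?e2"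
  have decomp: "(t - x) \<bullet> ?e1 = Y1 + W1" "(t - x) \<bullet> ?e2 = Y2 + W2"
    unfolding Y1_def Y2_def W1_def W2_def by (simp_all add: inner_diff_left)
  note sector = cone_sector_bounds[OF assms, folded Y1_def Y2_def]
  have "cos (2 * \<alpha>) * (dist x y + coef_perp m * \<bar>Y2\<bar>)
        \<le> Y1 + coef_perp m * (sin (2 * \<alpha>) * Y1)"
    using sector mult_left_mono[OF sector(2) coef_perp_nonneg] by (simp add: algebra_simps)
  also have "\<dots> = cos (2 * \<alpha>) * (coef_par m * Y1)" using coef_identity by (simp add: algebra_simps)
  finally have pay: "dist x y + coef_perp m * \<bar>Y2\<bar> \<le> coef_par m * Y1"
    using cos_2alpha_pos by (simp add: mult_le_cancel_left_pos)
  have "\<bar>W2\<bar> \<le> \<bar>Y2 + W2\<bar> + \<bar>Y2\<bar>" by linarith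
  from mult_left_mono[OF this coef_perp_nonneg]
  have tri: "coef_perp m * \<bar>W2\<bar> \<le> coef_perp m * \<bar>Y2 + W2\<bar> + coef_perp m * \<bar>Y2\<bar>"
    by (simp add: distrib_left)
  show ?thesis using pay tri
    unfolding frame_potential_def decomp W1_def[symmetric] W2_def[symmetric] by (simp add: algebra_simps)
qed

end

locale odd_cone_family = cone_family +
  fixes k :: nat
  assumes k_pos: "1 \<le> k" and m_residue: "m = 4 * k + 3 \<or> m = 4 * k + 5"
begin

lemma potential_le_frame_potential:
  assumes "y \<noteq> t" and ahead: "0 \<le> (t - y) \<bullet> dir (real i * cone_angle m)"
  shows "potential m y t \<le> frame_potential m (real i * cone_angle m) (t - y)"
proof -
  define j where "j = cone_idx m y t"
  have j: "j < m" "in_cone m y j t" using cone_idx[OF m_pos] assms(1) unfolding j_def by auto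
  obtain phi where phi: "real j * cone_angle m - cone_angle m / 2 \<le> phi"
      "phi < real j * cone_angle m + cone_angle m / 2" "t - y = norm (t - y) *\<^sub>R dir phi"
    using in_cone_polar[OF j(2)] by blast
  define r where "r = norm (t - y)"
  have r: "0 < r" using assms(1) by (simp add: r_def)
  obtain n :: int where n: "- pi \<le> phi - real i * cone_angle m - of_int n * (2*pi)"
      "phi - real i * cone_angle m - of_int n * (2*pi) < - pi + 2*pi"
    using angle_reduce[of "- pi" "phi - real i * cone_angle m"] by blast
  define p where "p = phi - real i * cone_angle m - of_int n * (2*pi)"
  have "dir (p + real i * cone_angle m) = dir phi"
    using dir_add_period[of "p + real i * cone_angle m" n] by (simp add: p_def)
  hence tp: "t - y = r *\<^sub>R dir (p + real i * cone_angle m)" using phi(3) by (simp add: r_def)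
  have "(t - y) \<bullet> dir (real i * cone_angle m) = r * cos p" unfolding tp by (simp add: inner_dir_dir)
  hence "0 \<le> cos p" using ahead r by (simp add: zero_le_mult_iff)
  hence p: "\<bar>p\<bar> \<le> pi/2" using n by (intro cos_nonneg_imp_abs_le) (auto simp: p_def)
  define L where "L = int j - int i - int m * n"
  have "of_int n * (2*pi) = of_int n * (real m * (4 * \<alpha>))"
    using cone_angle_full_turn[OF m_pos] by (simp add: cone_angle_eq)
  hence beta: "phi - real j * cone_angle m = p - 4 * of_int L * \<alpha>"
    unfolding p_def L_def cone_angle_eq by (simp add: algebra_simps)
  have "\<bar>phi - real j * cone_angle m\<bar> \<le> 2 * \<alpha>" using phi by (auto simp: cone_angle_eq)
  hence "weight \<alpha> (phi - real j * cone_angle m) \<le> weight \<alpha> p"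
    by (rule weight_wraparound[OF k_pos m_residue m_alpha p beta])
  hence "potential m y t \<le> r * weight \<alpha> p / weight_denom m"
    using potential_polar[OF j(2,1) phi(3)] r weight_denom_pos
    by (simp add: r_def divide_right_mono mult_left_mono)
  also have "\<dots> = frame_potential m (real i * cone_angle m) (t - y)"
    unfolding tp using r by (simp add: frame_potential_polar)
  finally show ?thesis .
qed

lemma potential_step:
  assumes t: "in_cone m x i t" "i < m" and y: "in_cone m x i y"
    and closer: "proj_len m x i y \<le> proj_len m x i t"
  shows "dist x y + potential m y t \<le> potential m x t"
proof -
  have "potential m y t \<le> frame_potential m (real i * cone_angle m) (t - y)"
  proof (cases "y = t")
    case False
    have "0 \<le> (t - y) \<bullet> dir (real i * cone_angle m)"
      using closer by (simp add: proj_len_def inner_diff_left)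
    thus ?thesis using potential_le_frame_potential False by blast
  qed (simp add: frame_potential_def)
  moreover have "potential m x t = frame_potential m (real i * cone_angle m) (t - x)"
    using cone_idx_eq[OF m_pos t] by (simp add: potential_def)
  ultimately show ?thesis using frame_potential_step[OF y, of t] by linarith
qed

end

section \<open>Theta-routing\<close>

text \<open>By general position the neighbour of x in a non-empty cone is well defined: it lies in P,
  in that cone, and has minimal projection onto the bisector.\<close>
lemma nbr_props:
  assumes P: "finite P" "general_position m P" and i: "i < m" and t: "t \<in> P" "in_cone m x i t"
  shows "nbr P m x i \<in> P" "in_cone m x i (nbr P m x i)"
    "proj_len m x i (nbr P m x i) \<le> proj_len m x i t"
proof -
  define S where "S = {v \<in> P. in_cone m x i v}"
  have S: "finite S" "t \<in> S" using P t by (simp_all add: S_def)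
  obtain v0 where v0: "v0 \<in> S" "Min (proj_len m x i ` S) = proj_len m x i v0"
    using obtains_MIN[OF S(1), of "proj_len m x i"] S(2) by blast
  have v0_min: "proj_len m x i v0 \<le> proj_len m x i w" if "w \<in> S" for w
  proof -
    have "Min (proj_len m x i ` S) \<le> proj_len m x i w" using S(1) that by (intro Min_le) auto
    thus ?thesis using v0(2) by simp
  qed
  let ?nearest = "\<lambda>v. v \<in> P \<and> in_cone m x i v
                   \<and> (\<forall>w\<in>P. in_cone m x i w \<longrightarrow> proj_len m x i v \<le> proj_len m x i w)"
  have "?nearest v0" using v0(1) v0_min by (auto simp: S_def)
  moreover have "v = v0" if "?nearest v" for v
  proof (rule ccontr)
    assume "v \<noteq> v0"
    have "proj_len m x i v = proj_len m x i v0" using that \<open>?nearest v0\<close> by (meson order_antisym)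
    hence "(v - v0) \<bullet> dir (real i * cone_angle m) = 0" by (simp add: proj_len_def inner_diff_left)
    moreover have "v \<in> P" "v0 \<in> P" using that \<open>?nearest v0\<close> by auto
    ultimately show False using P(2) i \<open>v \<noteq> v0\<close> unfolding general_position_def by blast
  qed
  ultimately have "?nearest (nbr P m x i)" unfolding nbr_def by (rule theI)
  thus "nbr P m x i \<in> P" "in_cone m x i (nbr P m x i)"
    "proj_len m x i (nbr P m x i) \<le> proj_len m x i t" using t by auto
qed

lemma (in odd_cone_family) route_step_decreases:
  assumes P: "finite P" "general_position m P" and "x \<in> P" "t \<in> P" "x \<noteq> t"
  shows "route_step P m t x \<in> P" "route_step P m t x \<noteq> x"
    "dist x (route_step P m t x) + potential m (route_step P m t x) t \<le> potential m x t"
proof -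
  have "route_step P m t x \<in> P \<and> route_step P m t x \<noteq> x \<and>
    dist x (route_step P m t x) + potential m (route_step P m t x) t \<le> potential m x t"
  proof (cases "theta_edge P m x t")
    case True
    thus ?thesis using assms potential_bounds(1)[of x t] by (simp add: route_step_def)
  next
    case False
    define i where "i = cone_idx m x t"
    have i: "i < m" "in_cone m x i t" using cone_idx[OF m_pos] assms(5) unfolding i_def by auto
    note nb = nbr_props[OF P i(1) assms(4) i(2)]
    have "route_step P m t x = nbr P m x i" using False assms(5) by (simp add: route_step_def i_def)
    moreover have "nbr P m x i \<noteq> x" using in_cone_neq[OF nb(2)] .
    ultimately show ?thesis using nb potential_step[OF i(2,1) nb(2,3)] by simp
  qed
  thus "route_step P m t x \<in> P" "route_step P m t x \<noteq> x"
    "dist x (route_step P m t x) + potential m (route_step P m t x) t \<le> potential m x t" by auto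
qed

lemma potential_descent:
  fixes f :: "'a::metric_space \<Rightarrow> 'a" and \<Phi> :: "'a \<Rightarrow> real"
  assumes "finite S" "u \<in> S" "t \<in> S" "f t = t" "\<Phi> t = 0"
    and step: "\<And>x. x \<in> S \<Longrightarrow> x \<noteq> t \<Longrightarrow> f x \<in> S \<and> f x \<noteq> x \<and> dist x (f x) + \<Phi> (f x) \<le> \<Phi> x"
  shows "\<exists>n. (f ^^ n) u = t \<and> (\<Sum>j<n. dist ((f ^^ j) u) ((f ^^ Suc j) u)) \<le> \<Phi> u"
proof -
  define x where "x j = (f ^^ j) u" for j
  have x_Suc: "x (Suc j) = f (x j)" for j by (simp add: x_def)
  have inv: "x n \<in> S \<and> (\<Sum>j<n. dist (x j) (x (Suc j))) + \<Phi> (x n) \<le> \<Phi> u" for n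
  proof (induction n)
    case 0 thus ?case using assms(2) by (simp add: x_def)
  next
    case (Suc n)
    show ?case
    proof (cases "x n = t")
      case True thus ?thesis using Suc assms(3,4) by (simp add: x_Suc)
    next
      case False thus ?thesis using Suc step[of "x n"] by (simp add: x_Suc)
    qed
  qed
  have "\<exists>n. x n = t"
  proof (rule ccontr)
    assume never: "\<nexists>n. x n = t"
    have "- \<Phi> (x n) < - \<Phi> (x (Suc n))" for n
    proof -
      have "x (Suc n) \<noteq> x n" "dist (x n) (x (Suc n)) + \<Phi> (x (Suc n)) \<le> \<Phi> (x n)"
        using step[of "x n"] inv[of n] never by (auto simp: x_Suc)
      moreover have "0 < dist (x n) (x (Suc n))" using calculation(1) by simp
      ultimately show ?thesis by linarith
    qed
    hence "strict_mono ((\<lambda>y. - \<Phi> y) \<circ> x)" by (simp add: strict_mono_Suc_iff)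
    hence inj: "inj x" by (rule inj_on_imageI2[OF strict_mono_imp_inj_on])
    have "range x \<subseteq> S" using inv by auto
    hence "finite (range x)" using assms(1) by (rule finite_subset)
    thus False using finite_imageD[OF _ inj] by simp
  qed
  then obtain n where "x n = t" by blast
  thus ?thesis using inv[of n] assms(5) by (auto simp: x_def)
qed

theorem mainTheorem14:
  fixes k m :: nat and P :: "point set" and u w :: point
  assumes "k \<ge> 1" and "m = 4 * k + 3 \<or> m = 4 * k + 5"
    and "finite P" and "general_position m P" and "u \<in> P" and "w \<in> P"
  shows "\<exists>n. route_seq P m u w n = w \<and>
           route_len P m u w n \<le>
             (1 + 2 * sin (cone_angle m / 2) * cos (cone_angle m / 4)
                  / (cos (cone_angle m / 2) - sin (3 * cone_angle m / 4))) * dist u w"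
proof -
  interpret odd_cone_family m k using assms(1,2) by unfold_locales auto
  have "\<exists>n. (route_step P m w ^^ n) u = w \<and>
          (\<Sum>j<n. dist ((route_step P m w ^^ j) u) ((route_step P m w ^^ Suc j) u))
            \<le> potential m u w"
  proof (rule potential_descent[where \<Phi> = "\<lambda>x. potential m x w"])
    show "route_step P m w w = w" by (simp add: route_step_def)
    show "\<And>x. x \<in> P \<Longrightarrow> x \<noteq> w \<Longrightarrow> route_step P m w x \<in> P \<and> route_step P m w x \<noteq> x
            \<and> dist x (route_step P m w x) + potential m (route_step P m w x) w \<le> potential m x w"
      using route_step_decreases[OF assms(3,4) _ assms(6)] by blast
  qed (use assms(3,5,6) in simp_all)
  then obtain n where "route_seq P m u w n = w" "route_len P m u w n \<le> potential m u w"
    unfolding route_seq_def route_len_def by blast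
  moreover have "potential m u w \<le> (cos (2 * \<alpha>) + sin \<alpha>) / weight_denom m * dist u w"
    by (rule potential_bounds(2))
  ultimately show ?thesis unfolding stretch_factor_eq by auto
qed

end
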